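(* Let $d\ge 1$, let $\Omega\subset\mathbb{R}^d$ be a bounded domain and $\Omega_{\rm c}\subset\Omega$ an open polytope with a triangulation $\mathcal{T}_h$ into closed simplices. Let $\mathcal{L}=\overline{\Omega}\cap\mathbb{Z}^d$, let $\mathcal{R}\subset\mathbb{Z}^d\setminus\{0\}$ be a finite set of bond directions and $\phi:\mathbb{R}^d\to\mathbb{R}$ a function. Let $\mathcal{B}=\{(x,x+r): x,x+r\in\mathcal{L},\ r\in\mathcal{R}\}$, $\mathcal{B}_{\rm c}=\{b\in\mathcal{B}: b\subset\Omega_{\rm c}\}$ and $\mathcal{B}_{\rm a}=\mathcal{B}\setminus\mathcal{B}_{\rm c}$. Let $y:\mathcal{L}\cup\overline{\Omega_{\rm c}}\to\mathbb{R}^d$ be continuous on $\overline{\Omega_{\rm c}}$ and affine on each $T\in\mathcal{T}_h$. Then \[ \sum_{b\in\mathcal{B}_{\rm a}}\phi(D_b y)+\sum_{b\in\mathcal{B}_{\rm c}}\int_0^1\phi\big(\nabla_{r_b}y(x_b+\lambda r_b)\big)\,d\lambda =\sum_{b\in\mathcal{B}_{\rm a}}\phi(D_b y)+\sum_{T\in\mathcal{T}_h}\sum_{r\in\mathcal{R}}\Omega_{T,r}\,\phi\big(\nabla_r y|_T\big), \] where for a bond $b=(x_b,x_b+r_b)$ we write $D_b y=y(x_b+r_b)-y(x_b)$, $\nabla_r y$ denotes the directional derivative of $y$ in the direction $r$ (i.e. $\nabla_r y(x)=\frac{d}{d\lambda}y(x+\lambda r)|_{\lambda=0}$, well defined for a.e.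 $\lambda$ along a bond contained in $\Omega_{\rm c}$), $\nabla_r y|_T$ is its constant value on $T$, and \[ \Omega_{T,r}:=\sum_{\substack{x\in\mathbb{Z}^d\\ (x,x+r)\in\mathcal{B}_{\rm c}}}\int_0^1\chi_T(x+\lambda r)\,d\lambda . \]
   Context: A bond $(x,x+r)$ is the open segment $\{x+\lambda r:\lambda\in(0,1)\}$. For a polytope $\omega\subset\mathbb{R}^d$ its characteristic function is defined pointwise by $\chi_\omega(x):=\lim_{\rho\to0}|\omega\cap B_\rho(x)|/|B_\rho(x)|$, where $B_\rho(x)$ is the ball of radius $\rho$ centered at $x$ (so it equals $1$ in the interior, $1/2$ on facets, and the normalized solid angle on lower-dimensional faces). *)

theory Defs
  imports "HOL-Analysis.Analysis"
begin

definition lattice_pts :: "(real^'n) set" where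
  "lattice_pts = {x. \<forall>i. x $ i \<in> \<int>}"

definition char_fun :: "(real^'n) set \<Rightarrow> real^'n \<Rightarrow> real" where
  "char_fun \<omega> x = Lim (at_right 0)
     (\<lambda>\<rho>. measure lebesgue (\<omega> \<inter> ball x \<rho>) / measure lebesgue (ball x \<rho>))"

definition dir_deriv :: "(real^'n \<Rightarrow> real^'n) \<Rightarrow> real^'n \<Rightarrow> real^'n \<Rightarrow> real^'n" where
  "dir_deriv y r x = vector_derivative (\<lambda>t. y (x + t *\<^sub>R r)) (at 0)"

text \<open>Constant value of the directional derivative on a (full-dimensional) simplex T,
  evaluated at an interior point of T.\<close>
definition dir_deriv_on :: "(real^'n \<Rightarrow> real^'n) \<Rightarrow> (real^'n) set \<Rightarrow> real^'n \<Rightarrow> real^'n" where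
  "dir_deriv_on y T r = dir_deriv y r (SOME x. x \<in> interior T)"

definition triangulation :: "(real^'n) set set \<Rightarrow> (real^'n) set \<Rightarrow> bool" where
  "triangulation \<T> S \<longleftrightarrow> finite \<T> \<and> \<Union>\<T> = S \<and>
     (\<forall>T\<in>\<T>. int CARD('n) simplex T) \<and>
     (\<forall>T\<in>\<T>. \<forall>T'\<in>\<T>. (T \<inter> T') face_of T \<and> (T \<inter> T') face_of T')"

text \<open>Bonds (x, x+r), encoded as pairs (x, r).\<close>
definition bonds :: "(real^'n) set \<Rightarrow> (real^'n) set \<Rightarrow> ((real^'n) \<times> (real^'n)) set" where
  "bonds L R = {(x, r). x \<in> L \<and> x + r \<in> L \<and> r \<in> R}"

definition bonds_c :: "(real^'n) set \<Rightarrow> (real^'n) set \<Rightarrow> (real^'n) set \<Rightarrow> ((real^'n) \<times> (real^'n)) set" where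
  "bonds_c L R \<Omega>c = {(x, r) \<in> bonds L R. open_segment x (x + r) \<subseteq> \<Omega>c}"

definition bond_weight :: "(real^'n) set \<Rightarrow> (real^'n) set \<Rightarrow> (real^'n) set \<Rightarrow> (real^'n) set \<Rightarrow> real^'n \<Rightarrow> real" where
  "bond_weight L R \<Omega>c T r =
     (\<Sum>x\<in>{x. (x, r) \<in> bonds_c L R \<Omega>c}. integral {0..1} (\<lambda>t. char_fun T (x + t *\<^sub>R r)))"

end

theory Submission
  imports Defs
begin

text \<open>
  Along a bond lying in \<open>\<Omega>c\<close>, the characteristic functions of the simplices form a partition of
  unity almost everywhere, because the simplices cover \<open>\<Omega>c\<close> and overlap only in lower-dimensional
  faces. Away from the finitely many parameters where the bond crosses the boundary of a simplex,
  the directional derivative of \<open>y\<close> at a point of a simplex \<open>T\<close> is the constant \<open>\<nabla>\<^sub>r y|\<^sub>T\<close>, and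
  at a point outside \<open>T\<close> the weight \<open>\<chi>\<^sub>T\<close> vanishes. Hence the integrand along each bond equals
  \<open>\<Sum>\<^sub>T \<chi>\<^sub>T \<phi>(\<nabla>\<^sub>r y|\<^sub>T)\<close> almost everywhere; integrating and exchanging the finite sums over bonds and
  simplices gives the weights \<open>\<Omega>\<^sub>T\<^sub>,\<^sub>r\<close>. That \<open>\<chi>\<^sub>T\<close> is well defined and integrable along lines
  comes from convexity: the density ratio of a convex set at one of its points is monotone in
  the radius, and for fixed radius it depends continuously on the centre.
\<close>

definition density_ratio :: "'a::euclidean_space set \<Rightarrow> 'a \<Rightarrow> real \<Rightarrow> real" where
  "density_ratio S z \<rho> = measure lebesgue (S \<inter> ball z \<rho>) / measure lebesgue (ball z \<rho>)"

lemma char_fun_eq_Lim_density_ratio: "char_fun T z = Lim (at_right 0) (density_ratio T z)"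
  unfolding char_fun_def density_ratio_def[abs_def] by simp

lemma char_fun_eqI: "(density_ratio T z \<longlongrightarrow> L) (at_right 0) \<Longrightarrow> char_fun T z = L"
  unfolding char_fun_eq_Lim_density_ratio by (rule tendsto_Lim[OF trivial_limit_at_right_real])

lemma lmeasurable_Int_ball: "S \<in> sets lebesgue \<Longrightarrow> S \<inter> ball z \<rho> \<in> lmeasurable"
  by (metis Int_commute fmeasurable_Int_fmeasurable lmeasurable_ball)

lemma density_ratio_bounds:
  assumes "S \<in> sets lebesgue" "0 < \<rho>"
  shows "0 \<le> density_ratio S z \<rho>" "density_ratio S z \<rho> \<le> 1"
proof -
  have "measure lebesgue (S \<inter> ball z \<rho>) \<le> measure lebesgue (ball z \<rho>)"
    by (rule measure_mono_fmeasurable) (use lmeasurable_Int_ball[OF assms(1)] in auto)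
  then show "0 \<le> density_ratio S z \<rho>" "density_ratio S z \<rho> \<le> 1"
    using content_ball_pos[OF assms(2), of z] by (auto simp: density_ratio_def)
qed

lemma measure_Int_ball_homothety:
  fixes S :: "'a::euclidean_space set"
  assumes "convex S" "S \<in> sets lebesgue" "z \<in> S" "0 < s" "s \<le> 1"
  shows "s ^ DIM('a) * measure lebesgue (S \<inter> ball z \<rho>) \<le> measure lebesgue (S \<inter> ball z (s * \<rho>))"
proof -
  let ?h = "\<lambda>w. s *\<^sub>R w + (1 - s) *\<^sub>R z"
  have into: "?h ` (S \<inter> ball z \<rho>) \<subseteq> S \<inter> ball z (s * \<rho>)"
  proof
    fix v assume "v \<in> ?h ` (S \<inter> ball z \<rho>)"
    then obtain w where w: "w \<in> S" "dist z w < \<rho>" and v: "v = ?h w" by auto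
    have "v \<in> S" using assms(1,3-5) w(1) unfolding v convex_def by auto
    moreover have "z - v = s *\<^sub>R (z - w)" unfolding v by (simp add: algebra_simps)
    then have "dist z v = s * dist z w" using assms(4) by (simp add: dist_norm)
    ultimately show "v \<in> S \<inter> ball z (s * \<rho>)" using w assms(4) by auto
  qed
  have "ennreal (s ^ DIM('a) * measure lebesgue (S \<inter> ball z \<rho>))
        = emeasure lebesgue (?h ` (S \<inter> ball z \<rho>))"
    using emeasure_lebesgue_affine[of s "(1 - s) *\<^sub>R z" "S \<inter> ball z \<rho>"]
      lmeasurable_Int_ball[OF assms(2)] assms(4)
    by (simp add: emeasure_eq_measure2 ennreal_mult)
  also have "\<dots> \<le> emeasure lebesgue (S \<inter> ball z (s * \<rho>))"
    using into lmeasurable_Int_ball[OF assms(2)] by (intro emeasure_mono) auto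
  also have "\<dots> = ennreal (measure lebesgue (S \<inter> ball z (s * \<rho>)))"
    using lmeasurable_Int_ball[OF assms(2)] by (simp add: emeasure_eq_measure2)
  finally show ?thesis by (simp add: ennreal_le_iff)
qed

lemma density_ratio_antimono:
  fixes S :: "'a::euclidean_space set"
  assumes "convex S" "S \<in> sets lebesgue" "z \<in> S" "0 < \<rho>'" "\<rho>' \<le> \<rho>"
  shows "density_ratio S z \<rho> \<le> density_ratio S z \<rho>'"
proof -
  define s where "s = \<rho>' / \<rho>"
  have s: "0 < s" "s \<le> 1" "\<rho>' = s * \<rho>" using assms(4,5) by (auto simp: s_def)
  have "measure lebesgue (ball z \<rho>') = s ^ DIM('a) * measure lebesgue (ball z \<rho>)"
    using content_ball_conv_unit_ball[of \<rho>' z] content_ball_conv_unit_ball[of \<rho> z] s assms(4,5)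
    by (simp add: power_mult_distrib)
  then have "density_ratio S z \<rho> = s ^ DIM('a) * measure lebesgue (S \<inter> ball z \<rho>) / measure lebesgue (ball z \<rho>')"
    using s(1) by (simp add: density_ratio_def)
  also have "\<dots> \<le> density_ratio S z \<rho>'"
    unfolding density_ratio_def s(3)
    using measure_Int_ball_homothety[OF assms(1-3) s(1,2)] by (intro divide_right_mono) auto
  finally show ?thesis .
qed

lemma density_ratio_eventually_zero:
  assumes "closed S" "z \<notin> S"
  shows "\<forall>\<^sub>F \<rho> in at_right 0. density_ratio S z \<rho> = 0"
proof -
  obtain e where "e > 0" "ball z e \<subseteq> - S"
    using assms open_contains_ball[of "- S"] by blast
  then have "S \<inter> ball z \<rho> = {}" if "\<rho> < e" for \<rho>
    using that by (auto simp: subset_eq)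
  then show ?thesis
    unfolding eventually_at_right_field using \<open>e > 0\<close> by (auto simp: density_ratio_def)
qed

lemma density_ratio_tendsto_char_fun:
  fixes T :: "(real^'n) set"
  assumes "convex T" "closed T"
  shows "(density_ratio T z \<longlongrightarrow> char_fun T z) (at_right 0)"
proof (cases "z \<in> T")
  case True
  have meas: "T \<in> sets lebesgue" using assms(2) by (simp add: borel_closed)
  define L where "L = (SUP \<rho>\<in>{0<..}. density_ratio T z \<rho>)"
  have bdd: "bdd_above (density_ratio T z ` {0<..})"
    using density_ratio_bounds(2)[OF meas] by (auto intro!: bdd_aboveI[of _ 1])
  have "(density_ratio T z \<longlongrightarrow> L) (at_right 0)"
  proof (rule order_tendstoI)
    fix a assume "a < L"
    then obtain \<rho>0 where "\<rho>0 > 0" "a < density_ratio T z \<rho>0"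
      unfolding L_def using bdd by (subst (asm) less_cSUP_iff) auto
    then show "\<forall>\<^sub>F \<rho> in at_right 0. a < density_ratio T z \<rho>"
      unfolding eventually_at_right_field
      using density_ratio_antimono[OF assms(1) meas True] by (meson order_less_le_trans less_imp_le)
  next
    fix a assume "a > L"
    have "density_ratio T z \<rho> \<le> L" if "\<rho> > 0" for \<rho>
      unfolding L_def using bdd that by (intro cSUP_upper) auto
    then show "\<forall>\<^sub>F \<rho> in at_right 0. density_ratio T z \<rho> < a"
      unfolding eventually_at_right_field using \<open>a > L\<close> by (intro exI[of _ 1]) force
  qed
  then show ?thesis using char_fun_eqI by metis
next
  case False
  have "(density_ratio T z \<longlongrightarrow> 0) (at_right 0)"
    using density_ratio_eventually_zero[OF assms(2) False] by (rule tendsto_eventually)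
  then show ?thesis using char_fun_eqI by metis
qed

lemma char_fun_outside:
  fixes T :: "(real^'n) set"
  assumes "closed T" "z \<notin> T"
  shows "char_fun T z = 0"
  using char_fun_eqI[OF tendsto_eventually[OF density_ratio_eventually_zero[OF assms]]] .

lemma char_fun_bounds:
  fixes T :: "(real^'n) set"
  assumes "convex T" "closed T"
  shows "0 \<le> char_fun T z" "char_fun T z \<le> 1"
proof -
  have "T \<in> sets lebesgue" using assms(2) by (simp add: borel_closed)
  then have "\<forall>\<^sub>F \<rho> in at_right 0. 0 \<le> density_ratio T z \<rho> \<and> density_ratio T z \<rho> \<le> 1"
    unfolding eventually_at_right_field using density_ratio_bounds by (intro exI[of _ 1]) auto
  then show "0 \<le> char_fun T z" "char_fun T z \<le> 1"
    by (auto intro: tendsto_lowerbound[OF density_ratio_tendsto_char_fun[OF assms]]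
        tendsto_upperbound[OF density_ratio_tendsto_char_fun[OF assms]] elim: eventually_mono)
qed

lemma measure_Int_ball_shift_le:
  assumes "S \<in> sets lebesgue" "dist z w < \<rho>"
  shows "measure lebesgue (S \<inter> ball z \<rho>) \<le> measure lebesgue (S \<inter> ball w \<rho>)
           + (measure lebesgue (ball z \<rho>) - measure lebesgue (ball z (\<rho> - dist z w)))"
proof -
  let ?D = "ball z \<rho> - ball z (\<rho> - dist z w)"
  have meas: "S \<inter> ball z \<rho> \<in> lmeasurable" "S \<inter> ball w \<rho> \<in> lmeasurable" "?D \<in> lmeasurable"
    using lmeasurable_Int_ball[OF assms(1)] by auto
  have "S \<inter> ball z \<rho> \<subseteq> (S \<inter> ball w \<rho>) \<union> ?D"
    using dist_triangle[of w _ z] by (auto simp: dist_commute) (smt (verit) dist_commute)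
  then have "measure lebesgue (S \<inter> ball z \<rho>) \<le> measure lebesgue ((S \<inter> ball w \<rho>) \<union> ?D)"
    using meas by (intro measure_mono_fmeasurable) auto
  also have "\<dots> \<le> measure lebesgue (S \<inter> ball w \<rho>) + measure lebesgue ?D"
    using meas by (intro measure_Un_le) auto
  also have "ball z (\<rho> - dist z w) \<subseteq> ball z \<rho>"
    by (rule subset_ball) simp
  then have "measure lebesgue ?D = measure lebesgue (ball z \<rho>) - measure lebesgue (ball z (\<rho> - dist z w))"
    using emeasure_lborel_ball_finite[of z \<rho>] by (intro measure_Diff) auto
  finally show ?thesis .
qed

lemma continuous_measure_Int_ball:
  fixes S :: "'a::euclidean_space set"
  assumes "S \<in> sets lebesgue" "0 < \<rho>"
  shows "continuous_on UNIV (\<lambda>z. measure lebesgue (S \<inter> ball z \<rho>))"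
  unfolding continuous_on_eq_continuous_at[OF open_UNIV]
proof (intro ballI)
  fix z :: 'a
  define c where "c = measure lebesgue (ball (0::'a) 1)"
  let ?f = "\<lambda>w. measure lebesgue (S \<inter> ball w \<rho>)"
  let ?g = "\<lambda>w. c * (\<rho> ^ DIM('a) - (\<rho> - dist w z) ^ DIM('a))"
  have ball: "measure lebesgue (ball v r) = r ^ DIM('a) * c" if "r \<ge> 0" for v :: 'a and r
    using content_ball_conv_unit_ball[OF that] by (simp add: c_def)
  have "(?g \<longlongrightarrow> c * (\<rho> ^ DIM('a) - (\<rho> - dist z z) ^ DIM('a))) (at z)"
    by (intro tendsto_intros)
  then have g0: "(?g \<longlongrightarrow> 0) (at z)" by simp
  have "norm (?f w - ?f z) \<le> ?g w" if "dist w z < \<rho>" for w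
  proof -
    have "?f z \<le> ?f w + ?g w" "?f w \<le> ?f z + ?g w"
      using measure_Int_ball_shift_le[OF assms(1), of z w \<rho>] measure_Int_ball_shift_le[OF assms(1), of w z \<rho>]
        ball[of \<rho>] ball[of "\<rho> - dist w z"] that assms(2)
      by (simp_all add: dist_commute algebra_simps)
    then show ?thesis by simp
  qed
  then have "\<forall>\<^sub>F w in at z. norm (?f w - ?f z) \<le> ?g w"
    unfolding eventually_at using assms(2) by blast
  then have "((\<lambda>w. ?f w - ?f z) \<longlongrightarrow> 0) (at z)"
    using g0 by (rule Lim_null_comparison)
  then show "isCont ?f z" unfolding isCont_def by (simp add: LIM_zero_iff)
qed

lemma char_fun_integrable_on_line:
  fixes T :: "(real^'n) set"
  assumes "convex T" "closed T"
  shows "(\<lambda>t. char_fun T (x + t *\<^sub>R r)) integrable_on {0..1}"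
proof -
  have meas_T: "T \<in> sets lebesgue" using assms(2) by (simp add: borel_closed)
  define \<rho> :: "nat \<Rightarrow> real" where "\<rho> n = inverse (real (Suc n))" for n
  have \<rho>: "\<rho> n > 0" for n by (simp add: \<rho>_def)
  have "filterlim \<rho> (at_right 0) sequentially"
    unfolding \<rho>_def by (simp add: filterlim_at LIMSEQ_inverse_real_of_nat del: of_nat_Suc)
  then have lim: "(\<lambda>n. density_ratio T (x + t *\<^sub>R r) (\<rho> n)) \<longlonglongrightarrow> char_fun T (x + t *\<^sub>R r)" for t
    by (rule filterlim_compose[OF density_ratio_tendsto_char_fun[OF assms]])
  have "continuous_on {0..1} (\<lambda>t. density_ratio T (x + t *\<^sub>R r) (\<rho> n))" for n
  proof -
    define c where "c = \<rho> n ^ CARD('n) * measure lebesgue (ball (0::real^'n) 1)"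
    have "c > 0" using \<rho>[of n] content_ball_pos[of 1 "0::real^'n"] by (simp add: c_def)
    have "density_ratio T (x + t *\<^sub>R r) (\<rho> n) = measure lebesgue (T \<inter> ball (x + t *\<^sub>R r) (\<rho> n)) / c" for t
      using content_ball_conv_unit_ball[of "\<rho> n" "x + t *\<^sub>R r"] \<rho>[of n] by (simp add: density_ratio_def c_def)
    moreover have "continuous_on {0..1} (\<lambda>t. measure lebesgue (T \<inter> ball (x + t *\<^sub>R r) (\<rho> n)))"
      by (rule continuous_on_compose2[OF continuous_measure_Int_ball[OF meas_T \<rho>]])
        (auto intro!: continuous_intros)
    ultimately show ?thesis using \<open>c > 0\<close> by (auto intro!: continuous_intros)
  qed
  then have "(\<lambda>t. char_fun T (x + t *\<^sub>R r)) \<in> borel_measurable (lebesgue_on {0..1})"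
    by (intro borel_measurable_LIMSEQ_real[OF lim] continuous_imp_measurable_on_sets_lebesgue) auto
  then show ?thesis
    by (rule measurable_bounded_by_integrable_imp_integrable[of _ _ "\<lambda>_. 1"])
      (use char_fun_bounds[OF assms] in auto)
qed

lemma sum_char_fun_eq_1:
  fixes \<T> :: "(real^'n) set set"
  assumes "finite \<T>" "\<And>T. T \<in> \<T> \<Longrightarrow> convex T \<and> closed T"
    and "pairwise (\<lambda>T T'. negligible (T \<inter> T')) \<T>"
    and "z \<in> interior (\<Union>\<T>)"
  shows "(\<Sum>T\<in>\<T>. char_fun T z) = 1"
proof -
  obtain e where e: "e > 0" "ball z e \<subseteq> \<Union>\<T>" using assms(4) mem_interior by blast
  have meas: "T \<in> sets lebesgue" if "T \<in> \<T>" for T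
    using assms(2)[OF that] by (simp add: borel_closed)
  have "(\<Sum>T\<in>\<T>. density_ratio T z \<rho>) = 1" if \<rho>: "0 < \<rho>" "\<rho> < e" for \<rho>
  proof -
    have "ball z \<rho> = (\<Union>T\<in>\<T>. T \<inter> ball z \<rho>)"
      using e(2) \<rho> by auto
    also have "measure lebesgue \<dots> = (\<Sum>T\<in>\<T>. measure lebesgue (T \<inter> ball z \<rho>))"
    proof (rule measure_negligible_finite_Union_image[OF assms(1)])
      show "T \<inter> ball z \<rho> \<in> lmeasurable" if "T \<in> \<T>" for T
        using lmeasurable_Int_ball meas that by blast
      show "pairwise (\<lambda>T T'. negligible (T \<inter> ball z \<rho> \<inter> (T' \<inter> ball z \<rho>))) \<T>"
        using assms(3) unfolding pairwise_def by (blast intro: negligible_subset)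
    qed
    finally show ?thesis
      using content_ball_pos[OF \<rho>(1), of z]
      by (simp add: density_ratio_def flip: sum_divide_distrib)
  qed
  then have "((\<lambda>\<rho>. \<Sum>T\<in>\<T>. density_ratio T z \<rho>) \<longlongrightarrow> 1) (at_right 0)"
    by (intro tendsto_eventually) (auto simp: eventually_at_right_field intro!: exI[of _ e] e(1))
  moreover have "((\<lambda>\<rho>. \<Sum>T\<in>\<T>. density_ratio T z \<rho>) \<longlongrightarrow> (\<Sum>T\<in>\<T>. char_fun T z)) (at_right 0)"
    using density_ratio_tendsto_char_fun assms(2) by (intro tendsto_sum) blast
  ultimately show ?thesis by (metis tendsto_unique trivial_limit_at_right_real)
qed

lemma dir_deriv_affine_on:
  fixes y :: "real^'n \<Rightarrow> real^'n" and A :: "real^'n^'n"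
  assumes "\<forall>z\<in>S. y z = A *v z + c" "t \<in> interior {s. x + s *\<^sub>R r \<in> S}"
  shows "dir_deriv y r (x + t *\<^sub>R r) = A *v r"
proof -
  obtain e where e: "e > 0" "ball t e \<subseteq> {s. x + s *\<^sub>R r \<in> S}"
    using assms(2) mem_interior by blast
  define w where "w = x + t *\<^sub>R r"
  have on_line: "y (w + s *\<^sub>R r) = (A *v w + c) + s *\<^sub>R (A *v r)" if "s \<in> ball 0 e" for s
  proof -
    have "t + s \<in> ball t e" using that by (simp add: dist_real_def)
    then have "x + (t + s) *\<^sub>R r \<in> S" using e(2) by blast
    then have "y (w + s *\<^sub>R r) = A *v (w + s *\<^sub>R r) + c"
      using assms(1) by (simp add: w_def scaleR_add_left add.assoc)
    also have "\<dots> = (A *v w + c) + s *\<^sub>R (A *v r)"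
      by (simp add: matrix_vector_right_distrib matrix_vector_mult_scaleR)
    finally show ?thesis .
  qed
  have "((\<lambda>s. (A *v w + c) + s *\<^sub>R (A *v r)) has_vector_derivative A *v r) (at 0)"
    by (auto intro!: derivative_eq_intros)
  then have "((\<lambda>s. y (w + s *\<^sub>R r)) has_vector_derivative A *v r) (at 0)"
    by (rule has_vector_derivative_transform_within_open[of _ _ _ "ball 0 e"]) (use e(1) on_line in auto)
  then show ?thesis unfolding dir_deriv_def w_def by (rule vector_derivative_at)
qed

lemma dir_deriv_on_affine:
  fixes y :: "real^'n \<Rightarrow> real^'n" and A :: "real^'n^'n"
  assumes "\<forall>z\<in>T. y z = A *v z + c" "interior T \<noteq> {}"
  shows "dir_deriv_on y T r = A *v r"
proof -
  define w where "w = (SOME x. x \<in> interior T)"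
  have "w \<in> interior T" unfolding w_def using assms(2) by (simp add: some_in_eq)
  moreover have "(\<lambda>s::real. w + s *\<^sub>R r) -` interior T \<subseteq> interior {s. w + s *\<^sub>R r \<in> T}"
    using interior_subset[of T]
    by (intro interior_maximal continuous_open_vimage) (auto intro!: continuous_intros)
  ultimately have "0 \<in> interior {s. w + s *\<^sub>R r \<in> T}" by auto
  then show ?thesis
    using dir_deriv_affine_on[OF assms(1)] unfolding dir_deriv_on_def w_def[symmetric] by force
qed

lemma convex_line_preimage: "convex S \<Longrightarrow> convex {t::real. x + t *\<^sub>R r \<in> S}"
proof -
  assume "convex S"
  have "{t::real. x + t *\<^sub>R r \<in> S} = (\<lambda>t. t *\<^sub>R r) -` ((\<lambda>z. z - x) ` S)"
    by (force simp: algebra_simps)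
  then show ?thesis
    using \<open>convex S\<close> by (simp add: convex_linear_vimage convex_translation_subtract)
qed

text \<open>Off the frontier of the parameter set of the line inside \<open>T\<close>, either the line is locally
  inside \<open>T\<close>, where \<open>y\<close> is affine, or the point lies outside \<open>T\<close>, where \<open>\<chi>\<^sub>T\<close> vanishes.\<close>

lemma char_fun_mult_dir_deriv_affine_on:
  fixes T :: "(real^'n) set" and A :: "real^'n^'n"
  assumes "closed T" "\<forall>z\<in>T. y z = A *v z + c" "t \<notin> frontier {s. x + s *\<^sub>R r \<in> T}"
  shows "char_fun T (x + t *\<^sub>R r) * \<phi> (dir_deriv y r (x + t *\<^sub>R r))
       = char_fun T (x + t *\<^sub>R r) * \<phi> (A *v r)"
proof (cases "x + t *\<^sub>R r \<in> T")
  case True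
  then have "t \<in> interior {s. x + s *\<^sub>R r \<in> T}"
    using assms(3) closure_subset unfolding frontier_def by fastforce
  then show ?thesis using dir_deriv_affine_on[OF assms(2)] by simp
qed (simp add: char_fun_outside[OF assms(1)])

lemma integral_dir_deriv_piecewise_affine:
  fixes \<T> :: "(real^'n) set set" and y :: "real^'n \<Rightarrow> real^'n" and A :: "(real^'n) set \<Rightarrow> real^'n^'n"
    and \<phi> :: "real^'n \<Rightarrow> real"
  assumes fin: "finite \<T>" and cc: "\<And>T. T \<in> \<T> \<Longrightarrow> convex T \<and> closed T"
    and pw: "pairwise (\<lambda>T T'. negligible (T \<inter> T')) \<T>"
    and affine: "\<And>T. T \<in> \<T> \<Longrightarrow> \<forall>z\<in>T. y z = A T *v z + c T"
    and "open S" "S \<subseteq> \<Union>\<T>" and seg: "\<And>t. 0 < t \<Longrightarrow> t < 1 \<Longrightarrow> x + t *\<^sub>R r \<in> S"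
  shows "integral {0..1} (\<lambda>t. \<phi> (dir_deriv y r (x + t *\<^sub>R r)))
         = (\<Sum>T\<in>\<T>. integral {0..1} (\<lambda>t. char_fun T (x + t *\<^sub>R r)) * \<phi> (A T *v r))"
proof -
  define N where "N = {0, 1} \<union> (\<Union>T\<in>\<T>. frontier {s. x + s *\<^sub>R r \<in> T})"
  have "negligible N"
    unfolding N_def using fin cc
    by (intro negligible_Un negligible_Union) (auto intro: negligible_convex_frontier convex_line_preimage)
  moreover have "\<phi> (dir_deriv y r (x + t *\<^sub>R r)) = (\<Sum>T\<in>\<T>. char_fun T (x + t *\<^sub>R r) * \<phi> (A T *v r))"
    if "t \<in> {0..1} - N" for t
  proof -
    have "x + t *\<^sub>R r \<in> S" using that seg unfolding N_def by auto
    then have "x + t *\<^sub>R r \<in> interior (\<Union>\<T>)"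
      using \<open>open S\<close> \<open>S \<subseteq> \<Union>\<T>\<close> interior_maximal by blast
    then have "\<phi> (dir_deriv y r (x + t *\<^sub>R r))
        = (\<Sum>T\<in>\<T>. char_fun T (x + t *\<^sub>R r) * \<phi> (dir_deriv y r (x + t *\<^sub>R r)))"
      using sum_char_fun_eq_1[OF fin cc pw] by (simp flip: sum_distrib_right)
    also have "\<dots> = (\<Sum>T\<in>\<T>. char_fun T (x + t *\<^sub>R r) * \<phi> (A T *v r))"
    proof (rule sum.cong[OF refl])
      fix T assume "T \<in> \<T>"
      then have "t \<notin> frontier {s. x + s *\<^sub>R r \<in> T}" using that unfolding N_def by blast
      then show "char_fun T (x + t *\<^sub>R r) * \<phi> (dir_deriv y r (x + t *\<^sub>R r))
          = char_fun T (x + t *\<^sub>R r) * \<phi> (A T *v r)"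
        using char_fun_mult_dir_deriv_affine_on cc affine \<open>T \<in> \<T>\<close> by blast
    qed
    finally show ?thesis .
  qed
  ultimately have "integral {0..1} (\<lambda>t. \<phi> (dir_deriv y r (x + t *\<^sub>R r)))
        = integral {0..1} (\<lambda>t. \<Sum>T\<in>\<T>. char_fun T (x + t *\<^sub>R r) * \<phi> (A T *v r))"
    by (intro integral_spike) auto
  also have "\<dots> = (\<Sum>T\<in>\<T>. integral {0..1} (\<lambda>t. char_fun T (x + t *\<^sub>R r) * \<phi> (A T *v r)))"
    using cc char_fun_integrable_on_line by (intro integral_sum fin integrable_on_mult_left) blast
  finally show ?thesis by simp
qed

lemma interior_nonempty_if_aff_dim_full:
  fixes T :: "'a::euclidean_space set"
  assumes "convex T" "aff_dim T = DIM('a)"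
  shows "interior T \<noteq> {}"
proof -
  have "affine hull T = UNIV" using assms(2) aff_dim_eq_full by blast
  moreover have "T \<noteq> {}" using assms(2) by auto
  ultimately show ?thesis
    using rel_interior_interior rel_interior_eq_empty[OF assms(1)] by metis
qed

lemma negligible_Int_full_dim_faces:
  fixes T T' :: "'a::euclidean_space set"
  assumes "convex T" "convex T'" "aff_dim T = DIM('a)" "aff_dim T' = DIM('a)"
    and "(T \<inter> T') face_of T" "(T \<inter> T') face_of T'" "T \<noteq> T'"
  shows "negligible (T \<inter> T')"
proof -
  have "T \<inter> T' \<noteq> T"
    using face_of_aff_dim_lt[OF assms(2) _ assms(7)] assms(3,4,6) by force
  then have "aff_dim (T \<inter> T') < DIM('a)"
    using face_of_aff_dim_lt[OF assms(1,5)] assms(3) by simp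
  then have "interior (T \<inter> T') = {}"
    using aff_dim_nonempty_interior by fastforce
  then have "T \<inter> T' \<subseteq> frontier (T \<inter> T')"
    using closure_subset[of "T \<inter> T'"] unfolding frontier_def by blast
  then show ?thesis
    using negligible_convex_frontier[OF convex_Int[OF assms(1,2)]] negligible_subset by blast
qed

lemma finite_Int_lattice_pts:
  fixes S :: "(real^'n) set"
  assumes "bounded S"
  shows "finite (S \<inter> lattice_pts)"
proof -
  obtain M where M: "\<And>x. x \<in> S \<Longrightarrow> norm x \<le> M" using assms bounded_iff by blast
  define K where "K = (of_int :: int \<Rightarrow> real) ` {-\<lceil>M\<rceil>..\<lceil>M\<rceil>}"
  have "x $ i \<in> K" if "x \<in> S \<inter> lattice_pts" for x i
  proof -
    have "x $ i \<in> \<int>" using that by (simp add: lattice_pts_def)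
    then obtain k where k: "x $ i = of_int k" by (rule Ints_cases)
    have "\<bar>x $ i\<bar> \<le> M" using M[of x] that component_le_norm_cart[of x i] by auto
    then have "\<bar>k\<bar> \<le> \<lceil>M\<rceil>" using k by linarith
    then show ?thesis unfolding K_def k by (intro image_eqI[of _ _ k]) auto
  qed
  then have "S \<inter> lattice_pts \<subseteq> (\<lambda>f. \<chi> i. f i) ` (PiE UNIV (\<lambda>_. K))"
    by (intro subsetI image_eqI[of _ _ "\<lambda>i. _ $ i"]) auto
  moreover have "finite (PiE (UNIV :: 'n set) (\<lambda>_. K))" by (intro finite_PiE) (auto simp: K_def)
  ultimately show ?thesis by (rule finite_subset[OF _ finite_imageI])
qed

lemma sum_case_prod_group_snd:
  assumes "finite B" "finite R" "B \<subseteq> UNIV \<times> R"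
  shows "(\<Sum>(x, r)\<in>B. F x r) = (\<Sum>r\<in>R. \<Sum>x\<in>{x. (x, r) \<in> B}. F x r)"
proof -
  have "finite {x. (x, r) \<in> B}" for r
    using finite_imageI[OF assms(1), of fst] by (rule finite_subset[rotated]) force
  then have "(\<Sum>r\<in>R. \<Sum>x\<in>{x. (x, r) \<in> B}. F x r) = (\<Sum>(r, x)\<in>(SIGMA r:R. {x. (x, r) \<in> B}). F x r)"
    by (intro sum.Sigma assms(2)) auto
  also have "(SIGMA r:R. {x. (x, r) \<in> B}) = prod.swap ` B" using assms(3) by auto
  also have "(\<Sum>(r, x)\<in>prod.swap ` B. F x r) = (\<Sum>(x, r)\<in>B. F x r)"
    by (subst sum.reindex) (auto simp: case_prod_beta)
  finally show ?thesis by simp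
qed

lemma triangulationD:
  fixes \<T> :: "(real^'n) set set"
  assumes "triangulation \<T> S"
  shows "finite \<T>" "\<Union>\<T> = S" "\<And>T. T \<in> \<T> \<Longrightarrow> convex T \<and> closed T"
    "\<And>T. T \<in> \<T> \<Longrightarrow> interior T \<noteq> {}" "pairwise (\<lambda>T T'. negligible (T \<inter> T')) \<T>"
proof -
  have simplex: "\<And>T. T \<in> \<T> \<Longrightarrow> int CARD('n) simplex T"
    and faces: "\<And>T T'. T \<in> \<T> \<Longrightarrow> T' \<in> \<T> \<Longrightarrow> (T \<inter> T') face_of T \<and> (T \<inter> T') face_of T'"
    using assms unfolding triangulation_def by auto
  have full: "aff_dim T = DIM(real^'n)" if "T \<in> \<T>" for T
    using aff_dim_simplex[OF simplex[OF that]] by simp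
  show "finite \<T>" "\<Union>\<T> = S" using assms unfolding triangulation_def by auto
  show cc: "convex T \<and> closed T" if "T \<in> \<T>" for T
    using convex_simplex[OF simplex[OF that]] closed_simplex[OF simplex[OF that]] by blast
  show "interior T \<noteq> {}" if "T \<in> \<T>" for T
    using interior_nonempty_if_aff_dim_full cc full that by blast
  show "pairwise (\<lambda>T T'. negligible (T \<inter> T')) \<T>"
    unfolding pairwise_def using cc full faces negligible_Int_full_dim_faces by blast
qed

lemma finite_bonds_c: "finite L \<Longrightarrow> finite R \<Longrightarrow> finite (bonds_c L R \<Omega>c)"
  by (rule finite_subset[of _ "L \<times> R"]) (auto simp: bonds_c_def bonds_def)

lemma add_scaleR_in_open_segment:
  fixes x r :: "'a::real_vector"
  assumes "r \<noteq> 0" "0 < t" "t < 1"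
  shows "x + t *\<^sub>R r \<in> open_segment x (x + r)"
  using assms by (auto simp: in_segment algebra_simps intro!: exI[of _ t])

lemma sum_bonds_c_eq_sum_bond_weight:
  assumes "finite (bonds_c L R \<Omega>c)" "finite R"
  shows "(\<Sum>(x, r)\<in>bonds_c L R \<Omega>c. \<Sum>T\<in>\<T>. integral {0..1} (\<lambda>t. char_fun T (x + t *\<^sub>R r)) * g T r)
       = (\<Sum>T\<in>\<T>. \<Sum>r\<in>R. bond_weight L R \<Omega>c T r * g T r)"
proof -
  have "(\<Sum>(x, r)\<in>bonds_c L R \<Omega>c. \<Sum>T\<in>\<T>. integral {0..1} (\<lambda>t. char_fun T (x + t *\<^sub>R r)) * g T r)
      = (\<Sum>T\<in>\<T>. \<Sum>(x, r)\<in>bonds_c L R \<Omega>c. integral {0..1} (\<lambda>t. char_fun T (x + t *\<^sub>R r)) * g T r)"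
    unfolding case_prod_unfold by (rule sum.swap)
  also have "\<dots> = (\<Sum>T\<in>\<T>. \<Sum>r\<in>R. \<Sum>x\<in>{x. (x, r) \<in> bonds_c L R \<Omega>c}.
      integral {0..1} (\<lambda>t. char_fun T (x + t *\<^sub>R r)) * g T r)"
    using assms by (intro sum.cong[OF refl] sum_case_prod_group_snd) (auto simp: bonds_c_def bonds_def)
  also have "\<dots> = (\<Sum>T\<in>\<T>. \<Sum>r\<in>R. bond_weight L R \<Omega>c T r * g T r)"
    by (simp add: bond_weight_def sum_distrib_right)
  finally show ?thesis .
qed

theorem proposition2p1:
  fixes \<Omega> \<Omega>c :: "(real^'n) set"
    and \<T> :: "(real^'n) set set"
    and R :: "(real^'n) set"
    and \<phi> :: "real^'n \<Rightarrow> real"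
    and y :: "real^'n \<Rightarrow> real^'n"
  assumes "open \<Omega>" and "connected \<Omega>" and "bounded \<Omega>"
    and "open \<Omega>c" and "\<Omega>c \<subseteq> \<Omega>" and "\<Omega>c = interior (closure \<Omega>c)"
    and "triangulation \<T> (closure \<Omega>c)"
    and "finite R" and "R \<subseteq> lattice_pts - {0}"
    and "continuous_on (closure \<Omega>c) y"
    and "\<forall>T\<in>\<T>. \<exists>A::real^'n^'n. \<exists>c. \<forall>x\<in>T. y x = A *v x + c"
  shows "(\<Sum>(x, r)\<in>bonds (closure \<Omega> \<inter> lattice_pts) R - bonds_c (closure \<Omega> \<inter> lattice_pts) R \<Omega>c.
             \<phi> (y (x + r) - y x))
         + (\<Sum>(x, r)\<in>bonds_c (closure \<Omega> \<inter> lattice_pts) R \<Omega>c.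
             integral {0..1} (\<lambda>t. \<phi> (dir_deriv y r (x + t *\<^sub>R r))))
       = (\<Sum>(x, r)\<in>bonds (closure \<Omega> \<inter> lattice_pts) R - bonds_c (closure \<Omega> \<inter> lattice_pts) R \<Omega>c.
             \<phi> (y (x + r) - y x))
         + (\<Sum>T\<in>\<T>. \<Sum>r\<in>R.
             bond_weight (closure \<Omega> \<inter> lattice_pts) R \<Omega>c T r * \<phi> (dir_deriv_on y T r))"
proof -
  let ?L = "closure \<Omega> \<inter> lattice_pts"
  let ?B = "bonds_c ?L R \<Omega>c"
  obtain A :: "(real^'n) set \<Rightarrow> real^'n^'n" and c
    where affine: "\<And>T. T \<in> \<T> \<Longrightarrow> \<forall>z\<in>T. y z = A T *v z + c T"
    using assms(11) by metis
  note tri = triangulationD[OF assms(7)]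
  have "\<Omega>c \<subseteq> \<Union>\<T>" using tri(2) closure_subset by blast
  have "integral {0..1} (\<lambda>t. \<phi> (dir_deriv y r (x + t *\<^sub>R r)))
      = (\<Sum>T\<in>\<T>. integral {0..1} (\<lambda>t. char_fun T (x + t *\<^sub>R r)) * \<phi> (dir_deriv_on y T r))"
    if "(x, r) \<in> ?B" for x r
  proof -
    have "x + t *\<^sub>R r \<in> \<Omega>c" if "0 < t" "t < 1" for t
      using \<open>(x, r) \<in> ?B\<close> assms(9) add_scaleR_in_open_segment[OF _ that]
      by (auto simp: bonds_c_def bonds_def)
    from integral_dir_deriv_piecewise_affine[OF tri(1,3,5) affine assms(4) \<open>\<Omega>c \<subseteq> \<Union>\<T>\<close> this]
    show ?thesis by (simp add: dir_deriv_on_affine[OF affine tri(4)])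
  qed
  then have "(\<Sum>(x, r)\<in>?B. integral {0..1} (\<lambda>t. \<phi> (dir_deriv y r (x + t *\<^sub>R r))))
      = (\<Sum>(x, r)\<in>?B. \<Sum>T\<in>\<T>. integral {0..1} (\<lambda>t. char_fun T (x + t *\<^sub>R r)) * \<phi> (dir_deriv_on y T r))"
    by (intro sum.cong refl) auto
  also have "\<dots> = (\<Sum>T\<in>\<T>. \<Sum>r\<in>R. bond_weight ?L R \<Omega>c T r * \<phi> (dir_deriv_on y T r))"
    using finite_Int_lattice_pts assms(3,8) by (intro sum_bonds_c_eq_sum_bond_weight finite_bonds_c) auto
  finally show ?thesis by simp
qed

end
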